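(* Fix $\epsilon>0$ and suppose that, along a run of the RD-Tracking-TMCTS sampling rule, there exists a positive integer $t_0$ such that $|w^{s_0}_\ell(\hat{\bm{\mu}}(t))-w^{s_0}_\ell(\bm{\mu})|\le\epsilon$ for all $t\ge t_0$ and all $\ell\in\mathcal{L}(\mathcal{T})$. Then there exists a positive integer $t_1\ge t_0$ such that \[\max_{\ell\in\mathcal{L}(\mathcal{T})}\Big|\frac{N_\ell(t)}{t}-w^{s_0}_\ell(\bm{\mu})\Big|\le2(|\mathcal{L}(\mathcal{T})|-1)\epsilon\quad\text{for all }t\ge t_1.\]
   Context: $\mathcal{T}$: finite rooted tree with root $s_0$, children $\mathcal{C}(s)$, leaves $\mathcal{L}(\mathcal{T})$, $\mathcal{D}(s)$ leaves descending from $s$; internal labels $L(s)\in\{\text{MAX},\text{MIN}\}$. $X\subseteq\mathbb{R}$ mean-parameter set of a one-parameter exponential family, $d(x,y)$ KL divergence, threshold $\theta\in X$. $V_s(\bm{\lambda})=\lambda_s$ at leaves, max/min of children's values at MAX/MIN nodes; $a_s=$'win' iff $V_s\ge\theta$. For any mean vector $\bm{\nu}$ the recursive weights are: $a^*=a_{s_0}(\bm{\nu})$; $P=$MAX, $Q=$MIN if $a^*=$'win', swapped if 'lose'. Leaf $s$: $w^s_s=1$, $d_s=d(\nu_s,\theta)$ if ($a^*=$'win', $\nu_s\ge\theta$) or ($a^*=$'lose', $\nu_s<\theta$), else $0$. $L(s)=P$: $d_s=\max_c d_c$, $c^*(s)\in\arg\max_c d_c$, if $d_s>0$: $w^s=w^{c^*(s)}$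 on $\mathcal{D}(c^*(s))$, $0$ elsewhere. $L(s)=Q$, all $d_c>0$: $d_s=(\sum_c1/d_c)^{-1}$, $w^s_\ell=\frac{w^c_\ell/d_c}{\sum_{c'}1/d_{c'}}$ on $\mathcal{D}(c)$. $L(s)=Q$ otherwise: $d_s=0$. Internal $s$ with $d_s=0$: $\bm{w}^s$ arbitrary probability vector. $\bm{\mu}$ is the true mean vector (so $\bm{w}^{s_0}(\bm{\mu})$ is a fixed probability vector). $N_\ell(t)$ is the number of draws of leaf $\ell$ in rounds $1..t$ and $\hat{\bm{\mu}}(t)$ the vector of empirical means. RD-Tracking-TMCTS sampling rule: draw each leaf once; then at round $t$, if some leaf has $N_\ell(t-1)<\sqrt t-|\mathcal{L}(\mathcal{T})|/2$ select $I(t)\in\arg\min_\ell N_\ell(t-1)$, else $I(t)\in\arg\max_\ell w^{s_0}_\ell(\hat{\bm{\mu}}(t-1))/N_\ell(t-1)$. *)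

theory Defs
  imports Complex_Main
begin

datatype label = LMax | LMin

datatype 'a gtree = Leaf 'a | Node label "'a gtree list"

fun leaves :: "'a gtree \<Rightarrow> 'a list" where
  "leaves (Leaf x) = [x]"
| "leaves (Node lab cs) = concat (map leaves cs)"

text \<open>Well-formedness: every internal node has at least one child.
  (Distinctness of leaf identifiers is required separately.)\<close>
fun wf_gtree :: "'a gtree \<Rightarrow> bool" where
  "wf_gtree (Leaf x) = True"
| "wf_gtree (Node lab cs) = (cs \<noteq> [] \<and> (\<forall>c\<in>set cs. wf_gtree c))"

fun tval :: "('a \<Rightarrow> real) \<Rightarrow> 'a gtree \<Rightarrow> real" where
  "tval \<nu> (Leaf x) = \<nu> x"
| "tval \<nu> (Node LMax cs) = Max (set (map (tval \<nu>) cs))"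
| "tval \<nu> (Node LMin cs) = Min (set (map (tval \<nu>) cs))"

text \<open>The quantities d_s.  win = (a* = 'win'); a node with label lab has label P
  iff (lab = LMax) = win.\<close>
fun dval :: "bool \<Rightarrow> (real \<Rightarrow> real \<Rightarrow> real) \<Rightarrow> real \<Rightarrow> ('a \<Rightarrow> real) \<Rightarrow> 'a gtree \<Rightarrow> real" where
  "dval win d \<theta> \<nu> (Leaf x) =
     (if (win \<and> \<nu> x \<ge> \<theta>) \<or> (\<not> win \<and> \<nu> x < \<theta>) then d (\<nu> x) \<theta> else 0)"
| "dval win d \<theta> \<nu> (Node lab cs) =
     (if (lab = LMax) = win then Max (set (map (dval win d \<theta> \<nu>) cs))
      else if (\<forall>c\<in>set cs. dval win d \<theta> \<nu> c > 0)
           then 1 / (\<Sum>c\<leftarrow>cs. 1 / dval win d \<theta> \<nu> c)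
      else 0)"

text \<open>The (non-deterministic, because of ties and of the arbitrary choice when d_s = 0)
  recursive weights: is_w win d theta nu s w means that w is an admissible choice of
  the vector w^s, extended by 0 outside D(s).\<close>
inductive is_w :: "bool \<Rightarrow> (real \<Rightarrow> real \<Rightarrow> real) \<Rightarrow> real \<Rightarrow> ('a \<Rightarrow> real)
                    \<Rightarrow> 'a gtree \<Rightarrow> ('a \<Rightarrow> real) \<Rightarrow> bool"
  for win d \<theta> \<nu> where
  leaf: "is_w win d \<theta> \<nu> (Leaf x) (\<lambda>l. if l = x then 1 else 0)"
| pnode: "\<lbrakk> (lab = LMax) = win; dval win d \<theta> \<nu> (Node lab cs) > 0; c \<in> set cs;
           dval win d \<theta> \<nu> c = dval win d \<theta> \<nu> (Node lab cs); is_w win d \<theta> \<nu> c w \<rbrakk>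
          \<Longrightarrow> is_w win d \<theta> \<nu> (Node lab cs) w"
| qnode: "\<lbrakk> (lab = LMax) \<noteq> win; \<forall>c\<in>set cs. dval win d \<theta> \<nu> c > 0;
           \<forall>i<length cs. is_w win d \<theta> \<nu> (cs ! i) (ws i) \<rbrakk>
          \<Longrightarrow> is_w win d \<theta> \<nu> (Node lab cs)
                (\<lambda>l. (\<Sum>i<length cs. ws i l / dval win d \<theta> \<nu> (cs ! i))
                     / (\<Sum>i<length cs. 1 / dval win d \<theta> \<nu> (cs ! i)))"
| zero: "\<lbrakk> dval win d \<theta> \<nu> (Node lab cs) = 0; \<forall>l. w l \<ge> 0;
           \<forall>l. l \<notin> set (leaves (Node lab cs)) \<longrightarrow> w l = 0;
           (\<Sum>l\<in>set (leaves (Node lab cs)). w l) = 1 \<rbrakk>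
          \<Longrightarrow> is_w win d \<theta> \<nu> (Node lab cs) w"

text \<open>w is an admissible choice of w^{s_0}(nu) for the root T, with a* = a_{s_0}(nu).\<close>
definition root_weights :: "'a gtree \<Rightarrow> (real \<Rightarrow> real \<Rightarrow> real) \<Rightarrow> real \<Rightarrow> ('a \<Rightarrow> real)
                             \<Rightarrow> ('a \<Rightarrow> real) \<Rightarrow> bool" where
  "root_weights T d \<theta> \<nu> w = is_w (tval \<nu> T \<ge> \<theta>) d \<theta> \<nu> T w"

text \<open>I t is the leaf drawn at round t (t = 1, 2, ...), Y t the observation at round t.\<close>
definition Ncount :: "(nat \<Rightarrow> 'a) \<Rightarrow> 'a \<Rightarrow> nat \<Rightarrow> nat" where
  "Ncount I l t = card {s \<in> {1..t}. I s = l}"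

definition muhat :: "(nat \<Rightarrow> 'a) \<Rightarrow> (nat \<Rightarrow> real) \<Rightarrow> nat \<Rightarrow> 'a \<Rightarrow> real" where
  "muhat I Y t l = (\<Sum>s\<in>{s \<in> {1..t}. I s = l}. Y s) / real (Ncount I l t)"

text \<open>W t is the weight vector w^{s_0}(muhat(t)) chosen along the run (for t >= |L|,
  when all empirical means are defined).\<close>
definition rd_tracking_run :: "'a gtree \<Rightarrow> (real \<Rightarrow> real \<Rightarrow> real) \<Rightarrow> real
      \<Rightarrow> (nat \<Rightarrow> 'a) \<Rightarrow> (nat \<Rightarrow> real) \<Rightarrow> (nat \<Rightarrow> 'a \<Rightarrow> real) \<Rightarrow> bool" where
  "rd_tracking_run T d \<theta> I Y W \<longleftrightarrow>
     (let L = set (leaves T); K = card L in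
       (\<forall>t\<ge>1. I t \<in> L) \<and>
       I ` {1..K} = L \<and>
       (\<forall>t\<ge>K. root_weights T d \<theta> (muhat I Y t) (W t)) \<and>
       (\<forall>t>K.
          if (\<exists>l\<in>L. real (Ncount I l (t - 1)) < sqrt (real t) - real K / 2)
          then (\<forall>l\<in>L. Ncount I (I t) (t - 1) \<le> Ncount I l (t - 1))
          else (\<forall>l\<in>L. W (t - 1) l / real (Ncount I l (t - 1))
                       \<le> W (t - 1) (I t) / real (Ncount I (I t) (t - 1)))))"

end

theory Submission
  imports Defs "HOL-Real_Asymp.Real_Asymp"
begin

text \<open>Once the weights W t are within \<epsilon> of w0, a leaf l is drawn at round n + 1 only if
  N_l(n) < sqrt (n + 1) (forced exploration) or N_l(n) \<le> n W_n(l): in the tracking step l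
  maximises W_n(j) / N_j(n), and these ratios cannot all lie below 1/n because both W_n and
  N(n)/n sum to 1. Hence N_l(t) \<le> t (w0_l + \<epsilon>) + O(sqrt t), so eventually
  N_l(t)/t \<le> w0_l + 2\<epsilon> at every leaf. As the frequencies and w0 both sum to 1, the upper
  bounds at the other |L| - 1 leaves give the matching lower bound at l.\<close>

definition prob_vector_on :: "'a set \<Rightarrow> ('a \<Rightarrow> real) \<Rightarrow> bool" where
  "prob_vector_on L w \<longleftrightarrow> (\<forall>l. w l \<ge> 0) \<and> (\<forall>l. l \<notin> L \<longrightarrow> w l = 0) \<and> sum w L = 1"

lemma prob_vector_on_mono:
  assumes "prob_vector_on L w" and "L \<subseteq> L'" and "finite L'"
  shows "prob_vector_on L' w"
proof -
  have "sum w L' = sum w L"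
    using assms by (intro sum.mono_neutral_right) (auto simp: prob_vector_on_def)
  then show ?thesis using assms unfolding prob_vector_on_def by auto
qed

lemma prob_vector_on_harmonic_mixture:
  fixes n :: nat and D :: "nat \<Rightarrow> real"
  assumes "finite L" and "n > 0" and D_pos: "\<forall>i<n. D i > 0"
    and ws: "\<forall>i<n. prob_vector_on L (ws i)"
  shows "prob_vector_on L (\<lambda>l. (\<Sum>i<n. ws i l / D i) / (\<Sum>i<n. 1 / D i))"
  unfolding prob_vector_on_def
proof (intro conjI allI impI)
  define Z where "Z = (\<Sum>i<n. 1 / D i)"
  have "Z > 0"
    unfolding Z_def using assms(2) D_pos by (intro sum_pos) auto
  show "(\<Sum>i<n. ws i l / D i) / (\<Sum>i<n. 1 / D i) \<ge> 0" for l
    using ws D_pos \<open>Z > 0\<close> unfolding Z_def prob_vector_on_def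
    by (intro divide_nonneg_pos sum_nonneg) auto
  show "(\<Sum>i<n. ws i l / D i) / (\<Sum>i<n. 1 / D i) = 0" if "l \<notin> L" for l
    using ws that unfolding prob_vector_on_def by simp
  have "(\<Sum>l\<in>L. (\<Sum>i<n. ws i l / D i) / Z) = (\<Sum>i<n. sum (ws i) L / D i) / Z"
    by (simp add: sum_divide_distrib sum.swap[of _ L])
  also have "\<dots> = Z / Z"
    using ws unfolding Z_def prob_vector_on_def by simp
  also have "\<dots> = 1" using \<open>Z > 0\<close> by simp
  finally show "(\<Sum>l\<in>L. (\<Sum>i<n. ws i l / D i) / (\<Sum>i<n. 1 / D i)) = 1"
    unfolding Z_def .
qed

lemma is_w_prob_vector_on:
  assumes "is_w win d \<theta> \<nu> T w" and "wf_gtree T"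
  shows "prob_vector_on (set (leaves T)) w"
  using assms
proof (induction rule: is_w.induct)
  case (leaf x)
  then show ?case by (simp add: prob_vector_on_def)
next
  case (pnode lab cs c w)
  then show ?case by (auto intro: prob_vector_on_mono)
next
  case (qnode lab cs ws)
  have "\<forall>i<length cs. prob_vector_on (set (leaves (Node lab cs))) (ws i)"
  proof (intro allI impI)
    fix i assume "i < length cs"
    then have "prob_vector_on (set (leaves (cs ! i))) (ws i)"
      using qnode.IH qnode.prems by auto
    moreover have "set (leaves (cs ! i)) \<subseteq> set (leaves (Node lab cs))"
      using \<open>i < length cs\<close> by (auto intro!: nth_mem)
    ultimately show "prob_vector_on (set (leaves (Node lab cs))) (ws i)"
      by (rule prob_vector_on_mono) simp
  qed
  then show ?case
    using qnode.hyps(2) qnode.prems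
    by (intro prob_vector_on_harmonic_mixture) (auto simp del: leaves.simps)
next
  case (zero lab cs w)
  then show ?case by (simp add: prob_vector_on_def)
qed

lemma Ncount_0 [simp]: "Ncount I l 0 = 0"
  unfolding Ncount_def by simp

lemma Ncount_Suc:
  "Ncount I l (Suc t) = Ncount I l t + (if I (Suc t) = l then 1 else 0)"
proof -
  have "{s \<in> {1..Suc t}. I s = l} =
        (if I (Suc t) = l then insert (Suc t) {s \<in> {1..t}. I s = l} else {s \<in> {1..t}. I s = l})"
    by (auto simp: le_Suc_eq)
  then show ?thesis unfolding Ncount_def by simp
qed

lemma Ncount_le: "Ncount I l t \<le> t"
proof -
  have "Ncount I l t \<le> card {1..t}" unfolding Ncount_def by (rule card_mono) auto
  then show ?thesis by simp
qed

lemma Ncount_pos: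
  assumes "s \<in> {1..t}" and "I s = l"
  shows "Ncount I l t > 0"
  using assms unfolding Ncount_def by (auto simp: card_gt_0_iff)

lemma sum_Ncount:
  assumes "finite L" and "\<forall>s\<ge>1. I s \<in> L"
  shows "(\<Sum>l\<in>L. Ncount I l t) = t"
  by (induction t) (use assms in \<open>simp_all add: Ncount_Suc sum.distrib\<close>)

lemma Ncount_le_max_of_drawn_le:
  fixes g :: "nat \<Rightarrow> real"
  assumes "mono g"
    and "\<forall>n\<ge>M. I (Suc n) = l \<longrightarrow> real (Ncount I l n) \<le> g (Suc n)"
    and "M \<le> t"
  shows "real (Ncount I l t) \<le> max (real (Ncount I l M)) (g t + 1)"
  using \<open>M \<le> t\<close>
proof (induction t rule: dec_induct)
  case base
  then show ?case by simp
next
  case (step n)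
  show ?case
  proof (cases "I (Suc n) = l")
    case True
    then have "real (Ncount I l n) \<le> g (Suc n)" using assms(2) step.hyps(1) by blast
    then show ?thesis using True by (simp add: Ncount_Suc)
  next
    case False
    have "g n \<le> g (Suc n)" using \<open>mono g\<close> by (simp add: monoD)
    then show ?thesis using False step.IH by (simp add: Ncount_Suc)
  qed
qed

lemma le_sum_mult_of_argmax_ratio:
  fixes N W :: "'a \<Rightarrow> real"
  assumes "finite L" and "l \<in> L" and "\<forall>j\<in>L. N j > 0" and "sum W L = 1"
    and "\<forall>j\<in>L. W j / N j \<le> W l / N l"
  shows "N l \<le> sum N L * W l"
proof -
  have "W j \<le> W l / N l * N j" if "j \<in> L" for j
    using assms(3,5) that by (simp add: pos_divide_le_eq)
  then have "1 \<le> W l / N l * sum N L"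
    using assms(4) by (metis sum_distrib_left sum_mono)
  then show ?thesis
    using assms(2,3) by (simp add: field_simps)
qed

lemma abs_diff_le_of_sum_eq_of_le_add:
  fixes p q :: "'a \<Rightarrow> real"
  assumes "finite L" and "l \<in> L" and "sum p L = sum q L" and "\<forall>j\<in>L. p j \<le> q j + \<delta>"
  shows "\<bar>p l - q l\<bar> \<le> (real (card L) - 1) * \<delta>"
proof -
  have lower: "q j - (real (card L) - 1) * \<delta> \<le> p j" if "j \<in> L" for j
  proof -
    have "card L \<ge> 1" using assms(1) that by (auto simp: Suc_le_eq card_gt_0_iff)
    have "sum p (L - {j}) \<le> sum (\<lambda>i. q i + \<delta>) (L - {j})"
      using assms(4) by (intro sum_mono) auto
    also have "\<dots> = sum q (L - {j}) + (real (card L) - 1) * \<delta>"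
      using assms(1) that \<open>card L \<ge> 1\<close> by (simp add: sum.distrib of_nat_diff)
    finally show ?thesis
      using assms(1,3) that by (simp add: sum.remove)
  qed
  have "p l - q l \<le> (real (card L) - 1) * \<delta>"
  proof (cases "L = {l}")
    case True
    then show ?thesis using assms(3) by simp
  next
    case False
    then obtain j where "j \<in> L" "j \<noteq> l" using assms(2) by blast
    then have "card L \<ge> 2"
      using assms(1,2) by (metis card_2_iff card_mono empty_subsetI insert_subset)
    have "0 \<le> real (card L) * \<delta>"
      using lower[OF \<open>j \<in> L\<close>] assms(4) \<open>j \<in> L\<close> by (auto simp: algebra_simps)
    then have "0 \<le> \<delta>" using \<open>card L \<ge> 2\<close> by (simp add: zero_le_mult_iff)
    then have "\<delta> \<le> (real (card L) - 1) * \<delta>"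
      using mult_right_mono[of 1 "real (card L) - 1" \<delta>] \<open>card L \<ge> 2\<close> by simp
    moreover have "p l \<le> q l + \<delta>" using assms(2,4) by blast
    ultimately show ?thesis by linarith
  qed
  then show ?thesis using lower[OF assms(2)] by simp
qed

lemma rd_tracking_run_draws_leaf:
  assumes "rd_tracking_run T d \<theta> I Y W" and "t \<ge> 1"
  shows "I t \<in> set (leaves T)"
  using assms unfolding rd_tracking_run_def Let_def by blast

lemma rd_tracking_run_Ncount_pos:
  assumes "rd_tracking_run T d \<theta> I Y W" and "l \<in> set (leaves T)"
    and "card (set (leaves T)) \<le> t"
  shows "Ncount I l t > 0"
proof -
  have "l \<in> I ` {1..card (set (leaves T))}"
    using assms(1,2) unfolding rd_tracking_run_def Let_def by simp
  then obtain s where "s \<in> {1..card (set (leaves T))}" "I s = l" by auto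
  then show ?thesis using Ncount_pos[of s t I l] assms(3) by auto
qed

lemma rd_tracking_run_weights:
  assumes "rd_tracking_run T d \<theta> I Y W" and "wf_gtree T"
    and "card (set (leaves T)) \<le> t"
  shows "\<forall>l. W t l \<ge> 0" and "(\<Sum>l\<in>set (leaves T). W t l) = 1"
  using assms is_w_prob_vector_on[of _ d \<theta> "muhat I Y t" T "W t"]
  unfolding rd_tracking_run_def Let_def root_weights_def prob_vector_on_def by blast+

lemma rd_tracking_run_selection:
  assumes "rd_tracking_run T d \<theta> I Y W" and "card (set (leaves T)) \<le> n"
  shows "if \<exists>j\<in>set (leaves T).
              real (Ncount I j n) < sqrt (real (Suc n)) - real (card (set (leaves T))) / 2
         then \<forall>j\<in>set (leaves T). Ncount I (I (Suc n)) n \<le> Ncount I j n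
         else \<forall>j\<in>set (leaves T).
                W n j / real (Ncount I j n) \<le> W n (I (Suc n)) / real (Ncount I (I (Suc n)) n)"
proof -
  have "Suc n > card (set (leaves T))" using assms(2) by simp
  with assms(1) show ?thesis
    unfolding rd_tracking_run_def Let_def by (metis diff_Suc_1)
qed

lemma rd_tracking_run_count_before_draw:
  assumes run: "rd_tracking_run T d \<theta> I Y W" and "wf_gtree T"
    and n: "card (set (leaves T)) \<le> n"
  shows "real (Ncount I (I (Suc n)) n) \<le> max (real n * W n (I (Suc n))) (sqrt (real (Suc n)))"
proof -
  define L where "L = set (leaves T)"
  define l where "l = I (Suc n)"
  have "l \<in> L" unfolding l_def L_def using rd_tracking_run_draws_leaf[OF run] by simp
  have rule: "if \<exists>j\<in>L. real (Ncount I j n) < sqrt (real (Suc n)) - real (card L) / 2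
      then \<forall>j\<in>L. Ncount I l n \<le> Ncount I j n
      else \<forall>j\<in>L. W n j / real (Ncount I j n) \<le> W n l / real (Ncount I l n)"
    using rd_tracking_run_selection[OF run n] unfolding L_def l_def .
  show ?thesis
  proof (cases "\<exists>j\<in>L. real (Ncount I j n) < sqrt (real (Suc n)) - real (card L) / 2")
    case True
    then obtain j where "j \<in> L" "real (Ncount I j n) < sqrt (real (Suc n)) - real (card L) / 2"
      by blast
    moreover have "Ncount I l n \<le> Ncount I j n" using rule True \<open>j \<in> L\<close> by simp
    ultimately show ?thesis unfolding l_def by linarith
  next
    case False
    have "real (Ncount I l n) \<le> (\<Sum>j\<in>L. real (Ncount I j n)) * W n l"
      using rule False \<open>l \<in> L\<close> rd_tracking_run_Ncount_pos[OF run] n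
        rd_tracking_run_weights(2)[OF run \<open>wf_gtree T\<close> n]
      by (intro le_sum_mult_of_argmax_ratio) (auto simp: L_def)
    also have "(\<Sum>j\<in>L. real (Ncount I j n)) = real n"
      using sum_Ncount[of L I n] rd_tracking_run_draws_leaf[OF run]
      unfolding L_def of_nat_sum[symmetric] by simp
    finally show ?thesis unfolding l_def by simp
  qed
qed

lemma rd_tracking_run_frequency_upper:
  assumes run: "rd_tracking_run T d \<theta> I Y W" and "wf_gtree T"
    and u: "\<forall>t\<ge>t0. \<forall>l\<in>set (leaves T). W t l \<le> u l" and "\<eta> > 0"
  shows "eventually (\<lambda>t. \<forall>l\<in>set (leaves T). real (Ncount I l t) / real t \<le> u l + \<eta>)
           sequentially"
proof (rule eventually_ball_finite[OF finite_set], rule ballI)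
  fix l assume l: "l \<in> set (leaves T)"
  define M where "M = max t0 (card (set (leaves T)))"
  have "card (set (leaves T)) > 0" using l by (auto simp: card_gt_0_iff)
  then have "M \<ge> 1" unfolding M_def by linarith
  have "0 \<le> W M l" using rd_tracking_run_weights(1)[OF run \<open>wf_gtree T\<close>] M_def by simp
  also have "\<dots> \<le> u l" using u l M_def by simp
  finally have "u l \<ge> 0" .
  define g where "g n = real n * u l + sqrt (real n)" for n
  have "mono g"
    unfolding g_def using \<open>u l \<ge> 0\<close>
    by (intro monoI add_mono mult_right_mono real_sqrt_le_mono) auto
  have drawn: "\<forall>n\<ge>M. I (Suc n) = l \<longrightarrow> real (Ncount I l n) \<le> g (Suc n)"
  proof (intro allI impI)
    fix n assume n: "n \<ge> M" and drawn_l: "I (Suc n) = l"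
    have "0 \<le> W n l" and "W n l \<le> u l"
      using rd_tracking_run_weights(1)[OF run \<open>wf_gtree T\<close>, of n] u l n M_def by auto
    then have "real n * W n l \<le> real (Suc n) * u l"
      using \<open>u l \<ge> 0\<close> by (intro mult_mono) auto
    then have "max (real n * W n l) (sqrt (real (Suc n))) \<le> g (Suc n)"
      unfolding g_def using \<open>u l \<ge> 0\<close> by (intro max.boundedI) (simp_all add: add_increasing2)
    then show "real (Ncount I l n) \<le> g (Suc n)"
      using rd_tracking_run_count_before_draw[OF run \<open>wf_gtree T\<close>, of n] n drawn_l M_def by auto
  qed
  have count_le: "real (Ncount I l t) \<le> real M + 1 + real t * u l + sqrt (real t)"
    if "t \<ge> M" for t
  proof -
    have "real (Ncount I l t) \<le> max (real (Ncount I l M)) (g t + 1)"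
      using \<open>mono g\<close> drawn that by (rule Ncount_le_max_of_drawn_le)
    also have "\<dots> \<le> real M + 1 + real t * u l + sqrt (real t)"
      using Ncount_le[of I l M] \<open>u l \<ge> 0\<close> unfolding g_def
      by (intro max.boundedI) (simp_all add: add_increasing2)
    finally show ?thesis .
  qed
  have "((\<lambda>t. (real M + 1 + sqrt (real t)) / real t) \<longlongrightarrow> 0) sequentially"
    by real_asymp
  then have "eventually (\<lambda>t. (real M + 1 + sqrt (real t)) / real t < \<eta>) sequentially"
    using \<open>\<eta> > 0\<close> by (rule order_tendstoD)
  then show "eventually (\<lambda>t. real (Ncount I l t) / real t \<le> u l + \<eta>) sequentially"
    using eventually_ge_at_top[of M]
  proof eventually_elim
    case (elim t)
    then have "real t > 0" using \<open>M \<ge> 1\<close> by simp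
    have "real (Ncount I l t) / real t \<le> (real M + 1 + real t * u l + sqrt (real t)) / real t"
      using count_le[OF elim(2)] \<open>real t > 0\<close> by (intro divide_right_mono) auto
    also have "\<dots> = u l + (real M + 1 + sqrt (real t)) / real t"
      using \<open>real t > 0\<close> by (simp add: field_simps)
    finally show ?case using elim(1) by simp
  qed
qed

theorem lemma8:
  fixes T :: "'a gtree" and d :: "real \<Rightarrow> real \<Rightarrow> real" and \<theta> :: real
    and \<mu> w0 :: "'a \<Rightarrow> real" and I :: "nat \<Rightarrow> 'a" and Y :: "nat \<Rightarrow> real"
    and W :: "nat \<Rightarrow> 'a \<Rightarrow> real" and \<epsilon> :: real and t0 :: nat
  assumes "wf_gtree T" and "distinct (leaves T)"
    and "\<forall>x y. d x y \<ge> 0" and "\<forall>x y. d x y = 0 \<longleftrightarrow> x = y"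
    and "\<epsilon> > 0"
    and "rd_tracking_run T d \<theta> I Y W"
    and "root_weights T d \<theta> \<mu> w0"
    and "t0 \<ge> 1"
    and "\<forall>t\<ge>t0. \<forall>l\<in>set (leaves T). \<bar>W t l - w0 l\<bar> \<le> \<epsilon>"
  shows "\<exists>t1\<ge>t0. \<forall>t\<ge>t1.
           (MAX l\<in>set (leaves T). \<bar>real (Ncount I l t) / real t - w0 l\<bar>)
             \<le> 2 * (real (card (set (leaves T))) - 1) * \<epsilon>"
proof -
  let ?L = "set (leaves T)" and ?freq = "\<lambda>t l. real (Ncount I l t) / real t"
  have "\<forall>t\<ge>t0. \<forall>l\<in>?L. W t l \<le> w0 l + \<epsilon>"
    using assms(9) by (fastforce dest: abs_le_D1)
  then have "eventually (\<lambda>t. \<forall>l\<in>?L. ?freq t l \<le> (w0 l + \<epsilon>) + \<epsilon>) sequentially"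
    by (rule rd_tracking_run_frequency_upper[OF assms(6,1) _ \<open>\<epsilon> > 0\<close>])
  then have "eventually (\<lambda>t. t \<ge> t0 \<and> (\<forall>l\<in>?L. ?freq t l \<le> w0 l + 2 * \<epsilon>)) sequentially"
    using eventually_ge_at_top[of t0] by eventually_elim auto
  then obtain t1 where t1: "\<forall>t\<ge>t1. t \<ge> t0 \<and> (\<forall>l\<in>?L. ?freq t l \<le> w0 l + 2 * \<epsilon>)"
    unfolding eventually_sequentially by blast
  have "(MAX l\<in>?L. \<bar>?freq t l - w0 l\<bar>) \<le> 2 * (real (card ?L) - 1) * \<epsilon>" if "t \<ge> t1" for t
  proof (rule Max.boundedI)
    have "t \<ge> t0" using t1 that by blast
    have "sum (?freq t) ?L = 1"
      using sum_Ncount[of ?L I t] rd_tracking_run_draws_leaf[OF assms(6)] \<open>t \<ge> t0\<close> assms(8)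
      by (simp add: sum_divide_distrib[symmetric] of_nat_sum[symmetric])
    moreover have "sum w0 ?L = 1"
      using is_w_prob_vector_on[OF assms(7)[unfolded root_weights_def] assms(1)]
      by (simp add: prob_vector_on_def)
    ultimately show "a \<le> 2 * (real (card ?L) - 1) * \<epsilon>"
      if "a \<in> (\<lambda>l. \<bar>?freq t l - w0 l\<bar>) ` ?L" for a
      using that t1 \<open>t \<ge> t1\<close>
        abs_diff_le_of_sum_eq_of_le_add[of ?L _ "?freq t" w0 "2 * \<epsilon>"]
      by (auto simp: mult_ac)
  qed (use rd_tracking_run_draws_leaf[OF assms(6), of 1] in auto)
  moreover have "t1 \<ge> t0" using t1 by blast
  ultimately show ?thesis by blast
qed

end
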